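(* Let $t$, $l$, $n$ be positive integers with $l < t$, and let $y = \left[\frac{t(n-l+1)-l}{t-l}\right]$. Let $\epsilon = 1$ if $y$ is odd and $\epsilon = 0$ otherwise. Then $R_{t-l,t}(K_{1,n}) > y - \epsilon$.
   Context: $[a]$ denotes the integer part (floor) of a real number $a$. $K_{1,n}$ is the star with $n$ edges. For a graph $G$ and integers $1 \leq s < t$, $R_{s,t}(G)$ is the smallest positive integer $N$ such that every coloring of the edges of the complete graph $K_N$ with $t$ colors contains a (not necessarily induced) subgraph isomorphic to $G$ whose edges use at most $s$ distinct colors. *)

theory Defs
  imports Main Complex_Main
begin

text \<open>A graph G is given by a vertex set V and an edge set E (each edge a 2-element
subset of V). Vertices of K_N are {..<N}; edges are the 2-element subsets.\<close>

definition edge_colorings :: "nat \<Rightarrow> nat \<Rightarrow> (nat set \<Rightarrow> nat) set" where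
  "edge_colorings t N = {c. \<forall>e. e \<subseteq> {..<N} \<and> card e = 2 \<longrightarrow> c e < t}"

text \<open>c contains a (not necessarily induced) copy of (V,E) in K_N whose edges use at most s colors.\<close>
definition has_s_colored_copy :: "nat \<Rightarrow> nat \<Rightarrow> (nat set \<Rightarrow> nat) \<Rightarrow> 'a set \<Rightarrow> 'a set set \<Rightarrow> bool" where
  "has_s_colored_copy s N c V E \<longleftrightarrow>
     (\<exists>f. inj_on f V \<and> f ` V \<subseteq> {..<N} \<and> card ((\<lambda>e. c (f ` e)) ` E) \<le> s)"

definition ramsey_st :: "nat \<Rightarrow> nat \<Rightarrow> 'a set \<Rightarrow> 'a set set \<Rightarrow> nat" where
  "ramsey_st s t V E = (LEAST N. 0 < N \<and> (\<forall>c \<in> edge_colorings t N. has_s_colored_copy s N c V E))"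

definition star_V :: "nat \<Rightarrow> nat set" where "star_V n = {0..n}"
definition star_E :: "nat \<Rightarrow> nat set set" where "star_E n = {{0, i} | i. i \<in> {1..n}}"

end

theory Submission
  imports Defs "HOL-Number_Theory.Cong"
begin

text \<open>For even \<open>M = m + 1\<close>, color each edge \<open>{a, b}\<close> of \<open>K\<^sub>M\<close> by \<open>r(a, b) mod t\<close>, where \<open>r\<close>
  is the round-robin proper edge coloring of \<open>K\<^sub>M\<close> with \<open>m\<close> colors. The \<open>n\<close> edges of a star
  then carry \<open>n\<close> distinct values of \<open>r\<close> below \<open>m\<close>; if they used only \<open>s \<le> t - l\<close> residues
  modulo \<open>t\<close>, then writing \<open>m = q t + \<rho>\<close> we would get \<open>n \<le> q s + min s \<rho>\<close>, which is
  incompatible with \<open>(t - l) M \<le> t (n - l + 1) - l\<close>. Hence \<open>K\<^sub>M\<close> has a coloring without a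
  \<open>(t - l)\<close>-colored \<open>K\<^sub>1\<^sub>,\<^sub>n\<close>, and \<open>R\<^sub>t\<^sub>-\<^sub>l\<^sub>,\<^sub>t(K\<^sub>1\<^sub>,\<^sub>n) > M\<close> for the largest even such \<open>M\<close>,
  which is \<open>y - \<epsilon>\<close>.\<close>

lemma edge_colorings_antimono:
  "N \<le> N' \<Longrightarrow> edge_colorings t N' \<subseteq> edge_colorings t N"
  unfolding edge_colorings_def by clarsimp (meson lessThan_subset_iff order.trans)

lemma has_s_colored_copy_mono:
  "has_s_colored_copy s N c V E \<Longrightarrow> N \<le> N' \<Longrightarrow> has_s_colored_copy s N' c V E"
  unfolding has_s_colored_copy_def by fastforce

lemma ramsey_st_spec:
  assumes "\<exists>N. 0 < N \<and> (\<forall>c \<in> edge_colorings t N. has_s_colored_copy s N c V E)"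
  shows "\<forall>c \<in> edge_colorings t (ramsey_st s t V E). has_s_colored_copy s (ramsey_st s t V E) c V E"
  using LeastI_ex[OF assms] unfolding ramsey_st_def by auto

lemma ramsey_st_gt:
  assumes "\<exists>N. 0 < N \<and> (\<forall>c \<in> edge_colorings t N. has_s_colored_copy s N c V E)"
    and "c \<in> edge_colorings t M" and "\<not> has_s_colored_copy s M c V E"
  shows "M < ramsey_st s t V E"
proof (rule ccontr)
  assume "\<not> M < ramsey_st s t V E"
  then have le: "ramsey_st s t V E \<le> M" by simp
  with assms(2) have "c \<in> edge_colorings t (ramsey_st s t V E)"
    using edge_colorings_antimono by blast
  with ramsey_st_spec[OF assms(1)] have "has_s_colored_copy s (ramsey_st s t V E) c V E"
    by blast
  with le assms(3) show False using has_s_colored_copy_mono by blast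
qed

lemma has_s_colored_copy_monochromatic_star:
  assumes "0 < n" "1 \<le> s" "T \<subseteq> {1..<N}" "card T = n" "\<forall>w \<in> T. c {0, w} = j"
  shows "has_s_colored_copy s N c (star_V n) (star_E n)"
proof -
  have "finite T" using assms(3) finite_subset by blast
  then obtain g where g: "bij_betw g {1..n} T"
    using ex_bij_betw_nat_finite_1 assms(4) by metis
  define f where "f i = (if i = 0 then 0 else g i)" for i
  have gT: "g i \<in> T" if "i \<in> {1..n}" for i using bij_betw_apply[OF g that] .
  then have g_pos: "0 < g i" if "i \<in> {1..n}" for i using that assms(3) by force
  have "inj_on g {1..n}" using g by (rule bij_betw_imp_inj_on)
  then have "inj_on f (star_V n)"
    unfolding inj_on_def f_def star_V_def using g_pos by (metis atLeastAtMost_iff less_one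
        linorder_not_le neq0_conv)
  moreover have "f ` star_V n \<subseteq> {..<N}"
  proof -
    have "T \<noteq> {}" using assms(1,4) by auto
    then have "0 < N" using assms(3) by auto
    moreover have "g i < N" if "i \<in> {1..n}" for i using gT[OF that] assms(3) by auto
    ultimately show ?thesis unfolding f_def star_V_def by auto
  qed
  moreover have "(\<lambda>e. c (f ` e)) ` star_E n \<subseteq> {j}"
  proof
    fix x assume "x \<in> (\<lambda>e. c (f ` e)) ` star_E n"
    then obtain i where i: "i \<in> {1..n}" "x = c (f ` {0, i})" unfolding star_E_def by auto
    then have "f ` {0, i} = {0, g i}" unfolding f_def by auto
    with i gT assms(5) show "x \<in> {j}" by simp
  qed
  then have "card ((\<lambda>e. c (f ` e)) ` star_E n) \<le> card {j}"
    by (intro card_mono) simp_all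
  then have "card ((\<lambda>e. c (f ` e)) ` star_E n) \<le> s"
    using assms(2) by simp
  ultimately show ?thesis unfolding has_s_colored_copy_def by blast
qed

lemma has_s_colored_copy_star_pigeonhole:
  assumes "0 < t" "0 < n" "1 \<le> s" "c \<in> edge_colorings t (t * n + 1)"
  shows "has_s_colored_copy s (t * n + 1) c (star_V n) (star_E n)"
proof -
  define N where "N = t * n + 1"
  define S where "S j = {w \<in> {1..<N}. c {0, w} = j}" for j
  have "{1..<N} \<subseteq> (\<Union>j<t. S j)"
  proof
    fix w assume w: "w \<in> {1..<N}"
    then have "c {0, w} < t" using assms(4) unfolding edge_colorings_def N_def by auto
    with w show "w \<in> (\<Union>j<t. S j)" unfolding S_def by blast
  qed
  have "\<exists>j<t. n \<le> card (S j)"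
  proof (rule ccontr)
    assume "\<not> ?thesis"
    then have small: "\<forall>j<t. card (S j) \<le> n - 1" by auto
    have "t * n = card {1..<N}" using N_def by simp
    also have "\<dots> \<le> card (\<Union>j<t. S j)"
      using \<open>{1..<N} \<subseteq> _\<close> by (intro card_mono) (auto simp: S_def)
    also have "\<dots> \<le> (\<Sum>j<t. card (S j))" by (rule card_UN_le) simp
    also have "\<dots> \<le> t * (n - 1)" using sum_mono[of "{..<t}", OF small[rule_format]] by simp
    finally show False using assms(1,2) by (cases n) auto
  qed
  then obtain j T where "T \<subseteq> S j" "card T = n"
    by (meson obtain_subset_with_card_n)
  then show ?thesis
    using has_s_colored_copy_monochromatic_star[OF assms(2,3), of T N c j]
    unfolding S_def N_def by blast
qed

text \<open>For odd \<open>m\<close> this is the classical proper edge coloring of \<open>K\<^sub>m\<^sub>+\<^sub>1\<close> with \<open>m\<close> colors: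
  the vertices below \<open>m\<close> are read in \<open>\<int>/m\<close>, edge \<open>{a, b}\<close> gets \<open>a + b\<close>, and the extra vertex \<open>m\<close>
  is joined to \<open>a\<close> by the color \<open>2a\<close>, the one color missing at \<open>a\<close> among the other edges.\<close>

definition round_robin :: "nat \<Rightarrow> nat \<Rightarrow> nat \<Rightarrow> nat" where
  "round_robin m a b =
     (if a = m then 2 * b mod m else if b = m then 2 * a mod m else (a + b) mod m)"

lemma round_robin_commute: "round_robin m a b = round_robin m b a"
  unfolding round_robin_def by (simp add: add.commute)

lemma round_robin_less: "0 < m \<Longrightarrow> round_robin m a b < m"
  unfolding round_robin_def by simp

lemma cong_add_lcancel_less_eq:
  "[v + w = v + w'] (mod m) \<Longrightarrow> w < m \<Longrightarrow> w' < m \<Longrightarrow> w = (w' :: nat)"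
  by (meson cong_add_lcancel_nat cong_less_modulus_unique_nat)

lemma round_robin_inj_on:
  assumes "odd m" "v \<le> m"
  shows "inj_on (round_robin m v) ({..m} - {v})"
proof (rule inj_onI)
  fix w1 w2 assume w: "w1 \<in> {..m} - {v}" "w2 \<in> {..m} - {v}"
    and eq: "round_robin m v w1 = round_robin m v w2"
  show "w1 = w2"
  proof (cases "v = m")
    case True
    then have "w1 < m" "w2 < m" using w by auto
    from eq True have "[2 * w1 = 2 * w2] (mod m)" by (simp add: round_robin_def cong_def)
    then have "[w1 = w2] (mod m)" using assms(1) cong_mult_lcancel_nat by fastforce
    with \<open>w1 < m\<close> \<open>w2 < m\<close> show ?thesis using cong_less_modulus_unique_nat by blast
  next
    case False
    then have "v < m" using assms(2) by simp
    have not_v: "[v + w = v + v] (mod m) \<Longrightarrow> w < m \<Longrightarrow> False" if "w \<noteq> v" for w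
      using that cong_add_lcancel_less_eq \<open>v < m\<close> by blast
    consider "w1 = m" "w2 = m" | "w1 = m" "w2 < m" | "w1 < m" "w2 = m" | "w1 < m" "w2 < m"
      using w by fastforce
    then show ?thesis
    proof cases
      case 2
      with eq False have "[v + w2 = v + v] (mod m)" by (simp add: round_robin_def cong_def mult_2)
      with 2 w not_v show ?thesis by blast
    next
      case 3
      with eq False have "[v + w1 = v + v] (mod m)"
        by (simp add: round_robin_def cong_def mult_2)
      with 3 w not_v show ?thesis by blast
    next
      case 4
      with eq False w have "[v + w2 = v + w1] (mod m)" by (simp add: round_robin_def cong_def)
      with 4 show ?thesis using cong_add_lcancel_less_eq by blast
    qed simp
  qed
qed

lemma card_le_residue_count:
  fixes K C :: "nat set"
  assumes "0 < t" "finite C" "K \<subseteq> {..<m}" "\<forall>k\<in>K. k mod t \<in> C"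
  shows "card K \<le> m div t * card C + min (card C) (m mod t)"
proof -
  let ?q = "m div t" and ?r = "m mod t"
  let ?T = "({..<?q} \<times> C) \<union> ({?q} \<times> (C \<inter> {..<?r}))"
  have "inj_on (\<lambda>k. (k div t, k mod t)) K"
    by (rule inj_onI) (metis div_mod_decomp prod.inject)
  moreover have "(\<lambda>k. (k div t, k mod t)) ` K \<subseteq> ?T"
  proof
    fix x assume "x \<in> (\<lambda>k. (k div t, k mod t)) ` K"
    then obtain k where k: "k \<in> K" "x = (k div t, k mod t)" by auto
    with assms(3) have "k < m" by auto
    then have "k div t \<le> ?q" and "k div t = ?q \<Longrightarrow> k mod t < ?r"
      by (auto simp: div_le_mono) (metis add_less_cancel_left div_mult_mod_eq)
    with k assms(4) show "x \<in> ?T" by force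
  qed
  ultimately have "card K \<le> card ?T"
    using assms(2) by (intro card_inj_on_le) auto
  also have "\<dots> \<le> card ({..<?q} \<times> C) + card ({?q} \<times> (C \<inter> {..<?r}))"
    by (rule card_Un_le)
  also have "\<dots> = ?q * card C + card (C \<inter> {..<?r})"
    by (simp add: card_cartesian_product)
  also have "card (C \<inter> {..<?r}) \<le> min (card C) ?r"
    using assms(2) card_mono[of C] card_mono[of "{..<?r}"] by simp
  finally show ?thesis by simp
qed

lemma round_robin_star_residues:
  assumes "odd m" "0 < t" "inj_on f {0..n}" "f ` {0..n} \<subseteq> {..m}"
    and "finite C" "\<forall>i \<in> {1..n}. round_robin m (f 0) (f i) mod t \<in> C"
  shows "n \<le> m div t * card C + min (card C) (m mod t)"
proof -
  define K where "K = round_robin m (f 0) ` f ` {1..n}"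
  have "f i \<in> {..m} - {f 0}" if "i \<in> {1..n}" for i
    using assms(4) inj_onD[OF assms(3), of i 0] that by (auto simp: image_subset_iff)
  then have "f ` {1..n} \<subseteq> {..m} - {f 0}" by (rule image_subsetI)
  moreover have "f 0 \<le> m" using assms(4) by (simp add: image_subset_iff)
  ultimately have "inj_on (round_robin m (f 0)) (f ` {1..n})"
    using round_robin_inj_on[OF assms(1)] by (rule_tac inj_on_subset) auto
  moreover have "inj_on f {1..n}" using assms(3) by (rule inj_on_subset) auto
  ultimately have "n = card K" unfolding K_def by (simp add: card_image)
  also have "\<dots> \<le> m div t * card C + min (card C) (m mod t)"
  proof (rule card_le_residue_count[OF assms(2,5)])
    have "0 < m" using assms(1) by presburger
    then show "K \<subseteq> {..<m}" using round_robin_less K_def by auto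
    show "\<forall>k\<in>K. k mod t \<in> C" using assms(6) K_def by auto
  qed
  finally show ?thesis .
qed

lemma residue_count_less_int:
  fixes S l n q r :: int
  assumes "0 < l" "0 \<le> S" "0 \<le> q" "0 \<le> r" "r < S + l"
    and hyp: "S * (q * (S + l) + r + 1) \<le> (S + l) * (n - l + 1) - l"
  shows "q * S + min S r < n"
proof (rule ccontr)
  assume "\<not> q * S + min S r < n"
  then have n: "n \<le> q * S + min S r" by simp
  show False
  proof (cases "S \<le> r")
    case True
    then have "(S + l) * n \<le> (S + l) * (q * S + S)" using n assms by (intro mult_left_mono) auto
    moreover have "S * S \<le> S * r" using True assms by (intro mult_left_mono) auto
    moreover have "l * l > 0" using assms(1) by simp
    ultimately show False using hyp by (simp add: algebra_simps)
  next
    case False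
    then have "(S + l) * n \<le> (S + l) * (q * S + r)" using n assms by (intro mult_left_mono) auto
    moreover have "l * r < l * (S + l)" using assms by (intro mult_strict_left_mono) auto
    ultimately show False using hyp by (simp add: algebra_simps)
  qed
qed

lemma residue_count_less:
  fixes t l n q r s :: nat
  assumes "0 < l" "l < t" "r < t" "s \<le> t - l"
    and "int (t - l) * int (q * t + r + 1) \<le> int t * (int n - int l + 1) - int l"
  shows "q * s + min s r < n"
proof -
  have "q * s + min s r \<le> q * (t - l) + min (t - l) r"
    using assms(4) by (intro add_mono) auto
  moreover have "int (q * (t - l) + min (t - l) r) < int n"
    unfolding of_nat_add of_nat_mult of_nat_min using assms
    by (intro residue_count_less_int[where l = "int l"]) (simp_all add: of_nat_diff ac_simps)
  ultimately show ?thesis by linarith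
qed

definition round_robin_coloring :: "nat \<Rightarrow> nat \<Rightarrow> nat set \<Rightarrow> nat" where
  "round_robin_coloring M t e = round_robin (M - 1) (Min e) (Max e) mod t"

lemma round_robin_coloring_insert:
  "round_robin_coloring M t {a, b} = round_robin (M - 1) a b mod t"
  unfolding round_robin_coloring_def by (cases "a \<le> b") (auto simp: round_robin_commute)

lemma round_robin_coloring_in_edge_colorings:
  "0 < t \<Longrightarrow> round_robin_coloring M t \<in> edge_colorings t N"
  unfolding edge_colorings_def round_robin_coloring_def by simp

lemma round_robin_coloring_no_copy:
  assumes "even M" "0 < l" "l < t"
    and "int (t - l) * int M \<le> int t * (int n - int l + 1) - int l"
  shows "\<not> has_s_colored_copy (t - l) M (round_robin_coloring M t) (star_V n) (star_E n)"
proof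
  assume "has_s_colored_copy (t - l) M (round_robin_coloring M t) (star_V n) (star_E n)"
  then obtain f where f: "inj_on f {0..n}" "f ` {0..n} \<subseteq> {..<M}"
    and few: "card ((\<lambda>e. round_robin_coloring M t (f ` e)) ` star_E n) \<le> t - l"
    unfolding has_s_colored_copy_def star_V_def by blast
  define m where "m = M - 1"
  define C where "C = (\<lambda>e. round_robin_coloring M t (f ` e)) ` star_E n"
  have "f 0 < M" using f(2) by (simp add: image_subset_iff)
  with assms(1) have "2 \<le> M" by presburger
  then have "odd m" and M: "M = m div t * t + m mod t + 1"
    using assms(1) m_def by auto
  have "round_robin m (f 0) (f i) mod t \<in> C" if "i \<in> {1..n}" for i
  proof -
    have "{0, i} \<in> star_E n" using that unfolding star_E_def by auto
    moreover have "round_robin_coloring M t (f ` {0, i}) = round_robin m (f 0) (f i) mod t"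
      using round_robin_coloring_insert m_def by simp
    ultimately show ?thesis unfolding C_def by force
  qed
  moreover have "finite C" unfolding C_def star_E_def by simp
  moreover have "f ` {0..n} \<subseteq> {..m}" using f(2) m_def by auto
  ultimately have "n \<le> m div t * card C + min (card C) (m mod t)"
    using round_robin_star_residues[OF \<open>odd m\<close> _ f(1)] assms(3) by simp
  moreover have "m div t * card C + min (card C) (m mod t) < n"
  proof (rule residue_count_less[OF assms(2,3)])
    show "m mod t < t" using assms(3) by simp
    show "card C \<le> t - l" using few unfolding C_def .
    show "int (t - l) * int (m div t * t + m mod t + 1) \<le> int t * (int n - int l + 1) - int l"
      unfolding M[symmetric] by (fact assms(4))
  qed
  ultimately show False by simp
qed

theorem theorem2:
  fixes t l n :: nat and y :: int and \<epsilon> :: int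
  assumes "0 < t" and "0 < l" and "0 < n" and "l < t"
    and "y = \<lfloor>real_of_int (int t * (int n - int l + 1) - int l) / real_of_int (int t - int l)\<rfloor>"
    and "\<epsilon> = (if odd y then 1 else 0)"
  shows "int (ramsey_st (t - l) t (star_V n) (star_E n)) > y - \<epsilon>"
proof (cases "y - \<epsilon> < 0")
  case False
  define a where "a = int t * (int n - int l + 1) - int l"
  define M where "M = nat (y - \<epsilon>)"
  have M: "int M = y - \<epsilon>" and "even M"
    using False assms(6) unfolding M_def by (auto simp: even_nat_iff)
  have "y = a div (int t - int l)"
    using assms(5) unfolding a_def by (simp only: floor_divide_of_int_eq)
  also have "int t - int l = int (t - l)" using assms(4) by simp
  finally have "int M \<le> a div int (t - l)" using M assms(6) by simp
  then have "int (t - l) * int M \<le> int (t - l) * (a div int (t - l))"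
    by (rule mult_left_mono) simp
  also have "\<dots> \<le> a"
    using mult_div_mod_eq[of "int (t - l)" a] pos_mod_sign[of "int (t - l)" a] assms(4) by linarith
  finally have no_copy:
    "\<not> has_s_colored_copy (t - l) M (round_robin_coloring M t) (star_V n) (star_E n)"
    using round_robin_coloring_no_copy[OF \<open>even M\<close> assms(2,4)] unfolding a_def by blast
  have "\<exists>N. 0 < N \<and> (\<forall>c \<in> edge_colorings t N. has_s_colored_copy (t - l) N c (star_V n) (star_E n))"
    using has_s_colored_copy_star_pigeonhole[OF assms(1,3)] assms(4) by (intro exI[of _ "t * n + 1"]) simp
  from ramsey_st_gt[OF this round_robin_coloring_in_edge_colorings[OF assms(1)] no_copy]
  show ?thesis using M by simp
qed simp

end
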